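(* Let $f:\mathbb{R}^n\to\mathbb{R}$ be convex and differentiable, and let $x_*$ be a minimizer of $f$ on $\mathbb{R}^n$, $f_*=f(x_* )$. Fix a starting point $x^0\in\mathbb{R}^n$ and put $R=\|x^0-x_*\|_2$, $B_R(x_* )=\{x:\|x-x_*\|_2\le R\}$. Assume that for some $L>0$ $$\|\nabla f(y)-\nabla f(x)\|_2\le L\|y-x\|_2\quad\text{for all } x,y\in B_R(x_* ).$$ Consider the fast gradient method (FGM) with $x^0=y^0=z^0$ and, for $k=0,1,\dots$, $$x^{k+1}=\tau_k z^k+(1-\tau_k)y^k,\qquad y^{k+1}=x^{k+1}-\tfrac1L\nabla f(x^{k+1}),\qquad z^{k+1}=z^k-\alpha_{k+1}\nabla f(x^{k+1}),$$ where $\alpha_{k+1}=\frac{k+2}{2L}$ and $\tau_k=\frac{2}{k+2}$. Then for every $N\ge1$ the generated points satisfy $$\max\{\|x^k-x_*\|_2,\|y^k-x_*\|_2,\|z^k-x_*\|_2\}\le\|x^0-x_*\|_2,\qquad k=0,\dots,N,$$ and, with $$\bar y^N=\frac{1}{N(N+3)}\Big(\sum_{k=1}^{N-1}y^k+(N+1)^2y^N\Big),$$ one has $$f(\bar y^N)\le\frac{4L}{N(N+3)}\min_{x\in\mathbb{R}^n}\Big\{\sum_{k=0}^{N-1}\frac{k+2}{2L}\big\{f(x^{k+1})+\langle\nabla f(x^{k+1}),x-x^{k+1}\rangle\big\}+\frac12\|z^0-x\|_2^2\Big\},$$ and consequently $$f(\bar y^N)-f_*\le\frac{2L\|z^0-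x_*\|_2^2}{N(N+3)}\le\frac{2LR^2}{(N+1)^2}.$$
   Context: $\|\cdot\|_2$ is the Euclidean norm. The step sizes $\alpha_{k+1}=\frac{k+2}{2L}$, $\tau_k=\frac{2}{k+2}$ are the solution of $\alpha_1=1/L$, $\alpha_k^2L=\alpha_{k+1}^2L-\alpha_{k+1}+\frac{1}{4L}$, $\tau_k=\frac{1}{\alpha_{k+1}L}$. *)

theory Defs
  imports "HOL-Analysis.Analysis"
begin

primrec fgm :: "('a::real_normed_vector \<Rightarrow> 'a) \<Rightarrow> real \<Rightarrow> 'a \<Rightarrow> nat \<Rightarrow> 'a \<times> 'a \<times> 'a" where
  "fgm g L x0 0 = (x0, x0, x0)"
| "fgm g L x0 (Suc k) =
     (let (x, y, z) = fgm g L x0 k;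
          \<tau> = 2 / (real k + 2);
          \<alpha> = (real k + 2) / (2 * L);
          xn = \<tau> *\<^sub>R z + (1 - \<tau>) *\<^sub>R y
      in (xn, xn - (1 / L) *\<^sub>R g xn, z - \<alpha> *\<^sub>R g xn))"

definition fgm_x where "fgm_x g L x0 k = fst (fgm g L x0 k)"
definition fgm_y where "fgm_y g L x0 k = fst (snd (fgm g L x0 k))"
definition fgm_z where "fgm_z g L x0 k = snd (snd (fgm g L x0 k))"

end

theory Submission
  imports Defs
begin

text \<open>With \<open>c = k + 2\<close> and \<open>G = \<nabla>f(x\<^sup>k\<^sup>+\<^sup>1)\<close>, one step of the method satisfies, for every \<open>u\<close>,
  \<open>c\<^sup>2 f(y\<^sup>k\<^sup>+\<^sup>1) - k c f(y\<^sup>k) + 2L\<parallel>z\<^sup>k\<^sup>+\<^sup>1 - u\<parallel>\<^sup>2 \<le> 2c (f(x\<^sup>k\<^sup>+\<^sup>1) + \<langle>G, u - x\<^sup>k\<^sup>+\<^sup>1\<rangle>) + 2L\<parallel>z\<^sup>k - u\<parallel>\<^sup>2\<close>: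
  combine the descent \<open>f(y\<^sup>k\<^sup>+\<^sup>1) \<le> f(x\<^sup>k\<^sup>+\<^sup>1) - \<parallel>G\<parallel>\<^sup>2/(2L)\<close> of the gradient step, the gradient
  inequality at \<open>y\<^sup>k\<close>, and the coupling \<open>2(z\<^sup>k - x\<^sup>k\<^sup>+\<^sup>1) = k(x\<^sup>k\<^sup>+\<^sup>1 - y\<^sup>k)\<close>.
  Summed over \<open>k < N\<close>, the left-hand sides telescope to the weighted sum of values whose
  weights define \<open>ybar\<close>, so Jensen's inequality bounds \<open>f ybar\<close> by the estimating function.
  Taking \<open>u = x\<^sub>*\<close> shows \<open>\<parallel>z\<^sup>N - x\<^sub>*\<parallel> \<le> \<parallel>z\<^sup>0 - x\<^sub>*\<parallel>\<close>; since \<open>x\<^sup>k\<^sup>+\<^sup>1\<close> is a convex combination and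
  the gradient step moves no farther from \<open>x\<^sub>*\<close> (cocoercivity), all iterates stay in the ball
  on which \<open>\<nabla>f\<close> is Lipschitz, which is what the step estimate needs.\<close>

lemma has_real_derivative_along_line:
  assumes "\<And>x. (f has_derivative (\<lambda>h. g x \<bullet> h)) (at x)"
  shows "((\<lambda>t. f (a + t *\<^sub>R d)) has_real_derivative g (a + t *\<^sub>R d) \<bullet> d) (at t)"
proof -
  have "((\<lambda>t. a + t *\<^sub>R d) has_derivative (\<lambda>s. s *\<^sub>R d)) (at t)"
    by (auto intro!: derivative_eq_intros)
  from has_derivative_compose[OF this assms]
  have "((\<lambda>t. f (a + t *\<^sub>R d)) has_derivative (\<lambda>s. g (a + t *\<^sub>R d) \<bullet> (s *\<^sub>R d))) (at t)"
    by (simp add: o_def)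
  moreover have "(\<lambda>s. g (a + t *\<^sub>R d) \<bullet> (s *\<^sub>R d)) = (*) (g (a + t *\<^sub>R d) \<bullet> d)"
    by (rule ext) simp
  ultimately show ?thesis
    by (simp add: has_field_derivative_def)
qed

lemma convex_gradient_inequality:
  fixes f :: "'a::real_inner \<Rightarrow> real"
  assumes conv: "convex_on UNIV f"
    and grad: "\<And>x. (f has_derivative (\<lambda>h. g x \<bullet> h)) (at x)"
  shows "f x + g x \<bullet> (y - x) \<le> f y"
proof -
  define \<phi> where "\<phi> t = f (x + t *\<^sub>R (y - x))" for t
  have conv_\<phi>: "convex_on UNIV \<phi>"
  proof (rule convex_onI)
    fix t a b :: real assume "t > 0" "t < 1"
    have "\<phi> ((1 - t) *\<^sub>R a + t *\<^sub>R b) = f ((1 - t) *\<^sub>R (x + a *\<^sub>R (y - x)) + t *\<^sub>R (x + b *\<^sub>R (y - x)))"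
      unfolding \<phi>_def by (simp add: algebra_simps)
    also have "\<dots> \<le> (1 - t) * \<phi> a + t * \<phi> b"
      unfolding \<phi>_def using convex_onD[OF conv, of t] \<open>t > 0\<close> \<open>t < 1\<close> by auto
    finally show "\<phi> ((1 - t) *\<^sub>R a + t *\<^sub>R b) \<le> (1 - t) * \<phi> a + t * \<phi> b" .
  qed simp
  have deriv_\<phi>: "(\<phi> has_field_derivative g x \<bullet> (y - x)) (at 0 within UNIV)"
    unfolding \<phi>_def using has_real_derivative_along_line[OF grad, of x "y - x" 0] by simp
  have "\<phi> 1 - \<phi> 0 \<ge> g x \<bullet> (y - x) * (1 - 0)"
    by (rule convex_on_imp_above_tangent[OF conv_\<phi> _ _ _ deriv_\<phi>]) auto
  then show ?thesis unfolding \<phi>_def by simp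
qed

lemma gradient_eq_0_at_minimum:
  assumes "(f has_derivative (\<lambda>h. g \<bullet> h)) (at x)" and "\<And>y. f x \<le> f y"
  shows "g = 0"
proof -
  have "(\<lambda>h. g \<bullet> h) = (\<lambda>h. 0)"
    by (rule has_derivative_local_min[OF assms(1)]) (auto intro: always_eventually assms(2))
  then have "g \<bullet> g = 0" by metis
  then show ?thesis by simp
qed

lemma descent_lemma:
  fixes f :: "'a::real_inner \<Rightarrow> real"
  assumes grad: "\<And>x. (f has_derivative (\<lambda>h. g x \<bullet> h)) (at x)"
    and S: "convex S" "a \<in> S" "b \<in> S"
    and lip: "\<And>x y. x \<in> S \<Longrightarrow> y \<in> S \<Longrightarrow> norm (g y - g x) \<le> L * norm (y - x)"
  shows "f b \<le> f a + g a \<bullet> (b - a) + L / 2 * (norm (b - a))^2"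
proof -
  define d where "d = b - a"
  define h where "h t = f (a + t *\<^sub>R d) - t * (g a \<bullet> d) - t^2 * L / 2 * (norm d)^2" for t
  have "h 1 \<le> h 0"
  proof (rule DERIV_nonpos_imp_nonincreasing[of 0 1])
    fix t :: real assume t: "0 \<le> t" "t \<le> 1"
    have "a + t *\<^sub>R d = (1 - t) *\<^sub>R a + t *\<^sub>R b" unfolding d_def by (simp add: algebra_simps)
    then have mem: "a + t *\<^sub>R d \<in> S"
      using convexD[OF S, of "1 - t" t] t by auto
    have D: "(h has_real_derivative g (a + t *\<^sub>R d) \<bullet> d - g a \<bullet> d - t * L * (norm d)^2) (at t)"
      unfolding h_def
      by (rule derivative_eq_intros has_real_derivative_along_line[OF grad] refl | simp)+
    have "(g (a + t *\<^sub>R d) - g a) \<bullet> d \<le> norm (g (a + t *\<^sub>R d) - g a) * norm d"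
      by (rule norm_cauchy_schwarz)
    also have "\<dots> \<le> L * norm (t *\<^sub>R d) * norm d"
      using lip[OF S(2) mem] by (simp add: mult_right_mono)
    also have "\<dots> = t * L * (norm d)^2" using t by (simp add: power2_eq_square)
    finally have "g (a + t *\<^sub>R d) \<bullet> d - g a \<bullet> d - t * L * (norm d)^2 \<le> 0"
      by (simp add: inner_diff_left)
    with D show "\<exists>y. (h has_real_derivative y) (at t) \<and> y \<le> 0" by blast
  qed simp
  then show ?thesis unfolding h_def d_def by simp
qed

lemma norm_diff_power2:
  fixes a b :: "'a::real_inner"
  shows "(norm (a - b))^2 = (norm a)^2 - 2 * (a \<bullet> b) + (norm b)^2"
  by (simp add: power2_norm_eq_inner inner_diff_left inner_diff_right inner_commute)

locale smooth_convex_minimization =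
  fixes f :: "'a::real_inner \<Rightarrow> real" and g :: "'a \<Rightarrow> 'a" and xs :: 'a and L R :: real
  assumes convex: "convex_on UNIV f"
    and gradient: "\<And>x. (f has_derivative (\<lambda>h. g x \<bullet> h)) (at x)"
    and minimizer: "\<And>x. f xs \<le> f x"
    and L_pos: "L > 0"
    and lipschitz: "\<And>x y. x \<in> cball xs R \<Longrightarrow> y \<in> cball xs R \<Longrightarrow>
                      norm (g y - g x) \<le> L * norm (y - x)"
begin

lemma gradient_inequality: "f x + g x \<bullet> (y - x) \<le> f y"
  by (rule convex_gradient_inequality[OF convex gradient])

lemma gradient_minimizer: "g xs = 0"
  by (rule gradient_eq_0_at_minimum[OF gradient minimizer])

lemma descent:
  assumes "a \<in> cball xs R" "b \<in> cball xs R"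
  shows "f b \<le> f a + g a \<bullet> (b - a) + L / 2 * (norm (b - a))^2"
  by (rule descent_lemma[OF gradient convex_cball assms lipschitz])

text \<open>Compare \<open>f\<close> at the point \<open>xs + g x / L\<close>, which stays in the ball because
  \<open>norm (g x - g xs) \<le> L * norm (x - xs)\<close>: from above by the descent lemma at \<open>xs\<close>,
  from below by the gradient inequality at \<open>x\<close>.\<close>

lemma gradient_cocoercive:
  assumes x: "x \<in> cball xs R"
  shows "f x - f xs \<le> g x \<bullet> (x - xs) - (norm (g x))^2 / (2 * L)"
proof -
  define b where "b = xs + (1 / L) *\<^sub>R g x"
  have xs: "xs \<in> cball xs R" using order_trans[OF zero_le_dist] x by auto
  have "norm (b - xs) = norm (g x - g xs) / L" using L_pos by (simp add: b_def gradient_minimizer)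
  also have "\<dots> \<le> norm (x - xs)"
    using lipschitz[OF xs x] L_pos by (simp add: divide_le_eq mult.commute)
  finally have "b \<in> cball xs R" using x by (simp add: dist_norm norm_minus_commute)
  then have "f b \<le> f xs + L / 2 * (norm (b - xs))^2"
    using descent[OF xs] by (simp add: gradient_minimizer)
  also have "L / 2 * (norm (b - xs))^2 = (norm (g x))^2 / (2 * L)"
    using L_pos by (simp add: b_def power_divide power2_eq_square)
  finally have upper: "f b \<le> f xs + (norm (g x))^2 / (2 * L)" .
  have "g x \<bullet> (b - x) = (norm (g x))^2 / L - g x \<bullet> (x - xs)"
    by (simp add: b_def inner_diff_right inner_add_right power2_norm_eq_inner)
  with gradient_inequality[of x b] upper L_pos show ?thesis
    by (simp add: field_simps)
qed

lemma gradient_step_norm_le: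
  assumes x: "x \<in> cball xs R"
  shows "norm (x - (1 / L) *\<^sub>R g x - xs) \<le> norm (x - xs)"
proof -
  have "(norm (g x))^2 / (2 * L) \<le> g x \<bullet> (x - xs)"
    using gradient_cocoercive[OF x] minimizer[of x] by linarith
  then have "(norm (g x))^2 / L^2 \<le> 2 / L * (g x \<bullet> (x - xs))"
    using L_pos by (simp add: power2_eq_square field_simps)
  moreover have "(norm ((x - xs) - (1 / L) *\<^sub>R g x))^2 =
      (norm (x - xs))^2 - 2 / L * (g x \<bullet> (x - xs)) + (norm (g x))^2 / L^2"
    using L_pos by (simp add: norm_diff_power2 inner_commute power_divide)
  ultimately have "(norm ((x - xs) - (1 / L) *\<^sub>R g x))^2 \<le> (norm (x - xs))^2"
    by linarith
  then show ?thesis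
    using power2_le_imp_le by (fastforce simp: algebra_simps)
qed

lemma gradient_step_in_cball:
  assumes "x \<in> cball xs r" "r \<le> R"
  shows "x - (1 / L) *\<^sub>R g x \<in> cball xs r"
  using gradient_step_norm_le[of x] assms by (auto simp: dist_norm norm_minus_commute)

lemma gradient_step_descent:
  assumes x: "x \<in> cball xs R"
  shows "f (x - (1 / L) *\<^sub>R g x) \<le> f x - (norm (g x))^2 / (2 * L)"
proof -
  have "x - (1 / L) *\<^sub>R g x \<in> cball xs R"
    using gradient_step_in_cball[OF x] by simp
  from descent[OF x this] L_pos show ?thesis
    by (simp add: power2_norm_eq_inner[symmetric] power_divide power2_eq_square field_simps)
qed

end

text \<open>Divided by \<open>N (N + 3)\<close>, the sum of its weights, this is the averaged point \<open>ybar\<close>.\<close>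

definition fgm_weighted_sum :: "(nat \<Rightarrow> 'b::real_vector) \<Rightarrow> nat \<Rightarrow> 'b" where
  "fgm_weighted_sum p N = (\<Sum>k=1..N-1. p k) + (real N + 1)^2 *\<^sub>R p N"

lemma fgm_weighted_sum_const:
  assumes "N \<ge> 1"
  shows "fgm_weighted_sum (\<lambda>_. c) N = (real N * (real N + 3)) *\<^sub>R c"
proof -
  have "real (N - 1) + (real N + 1)^2 = real N * (real N + 3)"
    using assms by (simp add: of_nat_diff power2_eq_square algebra_simps)
  then show ?thesis
    by (simp add: fgm_weighted_sum_def sum_constant_scaleR flip: scaleR_left_distrib)
qed

lemma fgm_weighted_sum_telescope:
  fixes F :: "nat \<Rightarrow> real"
  assumes "n \<ge> 1"
  shows "(\<Sum>k<n. (real k + 2)^2 * F (Suc k) - real k * (real k + 2) * F k) = fgm_weighted_sum F n"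
  using assms
proof (induction n rule: dec_induct)
  case base
  then show ?case by (simp add: fgm_weighted_sum_def)
next
  case (step m)
  then have "(\<Sum>j=1..Suc m - 1. F j) = (\<Sum>j=1..m-1. F j) + F m"
    by (cases m) auto
  with step.IH show ?case
    by (simp add: fgm_weighted_sum_def algebra_simps power2_eq_square)
qed

lemma fgm_weighted_sum_mono:
  fixes F G :: "nat \<Rightarrow> real"
  assumes "\<And>k. F k \<le> G k"
  shows "fgm_weighted_sum F N \<le> fgm_weighted_sum G N"
  using assms by (simp add: fgm_weighted_sum_def add_mono sum_mono mult_left_mono)

lemma sum_fgm_step_weights: "(\<Sum>k<n. 2 * (real k + 2)) = real n * (real n + 3)"
  by (induction n) (simp_all add: algebra_simps)

lemma fgm_weighted_sum_eq_sum:
  assumes "N \<ge> 1"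
  shows "fgm_weighted_sum p N = (\<Sum>i=1..N. (if i = N then (real N + 1)^2 else 1) *\<^sub>R p i)"
proof -
  obtain m where N: "N = Suc m" using assms by (cases N) auto
  have "(\<Sum>i=1..m. (if i = N then (real N + 1)^2 else 1) *\<^sub>R p i) = (\<Sum>i=1..m. p i)"
    by (rule sum.cong) (auto simp: N)
  then show ?thesis
    by (simp add: fgm_weighted_sum_def N)
qed

lemma convex_on_fgm_weighted_average:
  fixes f :: "'a::real_vector \<Rightarrow> real"
  assumes conv: "convex_on UNIV f" and N: "N \<ge> 1"
  shows "f ((1 / (real N * (real N + 3))) *\<^sub>R fgm_weighted_sum p N)
           \<le> fgm_weighted_sum (\<lambda>k. f (p k)) N / (real N * (real N + 3))"
proof -
  define D where "D = real N * (real N + 3)"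
  define w where "w i = (if i = N then (real N + 1)^2 else 1) / D" for i
  have D: "D > 0" using N by (simp add: D_def)
  have "(\<Sum>i=1..N. w i) = fgm_weighted_sum (\<lambda>_. 1::real) N / D"
    by (simp add: w_def fgm_weighted_sum_eq_sum[OF N] sum_divide_distrib)
  then have weights: "(\<Sum>i=1..N. w i) = 1"
    using D N by (simp add: fgm_weighted_sum_const[OF N] D_def)
  have "f ((1 / D) *\<^sub>R fgm_weighted_sum p N) = f (\<Sum>i=1..N. w i *\<^sub>R p i)"
    by (simp add: fgm_weighted_sum_eq_sum[OF N] w_def scaleR_sum_right divide_inverse mult.commute)
  also have "\<dots> \<le> (\<Sum>i=1..N. w i * f (p i))"
    by (rule convex_on_sum[OF _ _ conv weights]) (use N D in \<open>auto simp: w_def\<close>)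
  also have "\<dots> = fgm_weighted_sum (\<lambda>k. f (p k)) N / D"
    by (simp add: fgm_weighted_sum_eq_sum[OF N] w_def sum_divide_distrib)
  finally show ?thesis unfolding D_def .
qed

locale fgm_iterates =
  fixes g :: "'a::real_normed_vector \<Rightarrow> 'a" and L :: real and x0 :: 'a
begin

abbreviation "X k \<equiv> fgm_x g L x0 k"
abbreviation "Y k \<equiv> fgm_y g L x0 k"
abbreviation "Z k \<equiv> fgm_z g L x0 k"

lemma fgm_0: "X 0 = x0" "Y 0 = x0" "Z 0 = x0"
  by (simp_all add: fgm_x_def fgm_y_def fgm_z_def)

lemma fgm_Suc:
  "X (Suc k) = (2 / (real k + 2)) *\<^sub>R Z k + (1 - 2 / (real k + 2)) *\<^sub>R Y k"
  "Y (Suc k) = X (Suc k) - (1 / L) *\<^sub>R g (X (Suc k))"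
  "Z (Suc k) = Z k - ((real k + 2) / (2 * L)) *\<^sub>R g (X (Suc k))"
  by (simp_all add: fgm_x_def fgm_y_def fgm_z_def Let_def split: prod.split)

lemma fgm_coupling: "2 *\<^sub>R (Z k - X (Suc k)) = real k *\<^sub>R (X (Suc k) - Y k)"
proof -
  have "(real k + 2) * (2 / (real k + 2)) = 2" "(real k + 2) * (1 - 2 / (real k + 2)) = real k"
    by (simp_all add: field_simps)
  then have "(real k + 2) *\<^sub>R X (Suc k) = 2 *\<^sub>R Z k + real k *\<^sub>R Y k"
    by (simp add: fgm_Suc(1) scaleR_add_right)
  then show ?thesis
    by (simp add: algebra_simps)
qed

end

definition fgm_model :: "('a::real_inner \<Rightarrow> real) \<Rightarrow> ('a \<Rightarrow> 'a) \<Rightarrow> real \<Rightarrow> 'a \<Rightarrow> nat \<Rightarrow> 'a \<Rightarrow> real" where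
  "fgm_model f g L x0 N u =
     (\<Sum>k<N. (real k + 2) / (2 * L) *
        (f (fgm_x g L x0 (Suc k)) + g (fgm_x g L x0 (Suc k)) \<bullet> (u - fgm_x g L x0 (Suc k))))
     + 1/2 * (norm (fgm_z g L x0 0 - u))^2"

locale fgm_run = smooth_convex_minimization f g xs L R + fgm_iterates g L x0
  for f :: "'a::real_inner \<Rightarrow> real" and g xs L R x0 +
  assumes start_in_cball: "norm (x0 - xs) \<le> R"
begin

lemma fgm_z_dist_Suc:
  "2 * L * (norm (Z (Suc k) - u))^2 = 2 * L * (norm (Z k - u))^2
     - 2 * (real k + 2) * (g (X (Suc k)) \<bullet> (Z k - u)) + (real k + 2)^2 * (norm (g (X (Suc k))))^2 / (2 * L)"
proof -
  define c where "c = real k + 2"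
  define G where "G = g (X (Suc k))"
  have step: "Z (Suc k) - u = (Z k - u) - (c / (2 * L)) *\<^sub>R G"
    by (simp add: fgm_Suc(3) c_def G_def)
  have "(norm (Z (Suc k) - u))^2 = (norm (Z k - u))^2 - 2 * ((Z k - u) \<bullet> ((c / (2 * L)) *\<^sub>R G))
                                          + (norm ((c / (2 * L)) *\<^sub>R G))^2"
    unfolding step by (rule norm_diff_power2)
  also have "\<dots> = (norm (Z k - u))^2 - c / L * (G \<bullet> (Z k - u)) + c^2 / (4 * L^2) * (norm G)^2"
    using L_pos by (simp add: inner_commute power_mult_distrib power_divide)
  finally show ?thesis
    using L_pos unfolding c_def[symmetric] G_def[symmetric] by (simp add: field_simps power2_eq_square)
qed

lemma fgm_step_estimate:
  assumes Y: "Y k \<in> cball xs R" and Z: "Z k \<in> cball xs R"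
  shows "(real k + 2)^2 * f (Y (Suc k)) - real k * (real k + 2) * f (Y k) + 2 * L * (norm (Z (Suc k) - u))^2
      \<le> 2 * (real k + 2) * (f (X (Suc k)) + g (X (Suc k)) \<bullet> (u - X (Suc k))) + 2 * L * (norm (Z k - u))^2"
proof -
  define c where "c = real k + 2"
  define G where "G = g (X (Suc k))"
  have "X (Suc k) \<in> cball xs R"
    unfolding fgm_Suc(1) by (rule convexD[OF convex_cball Z Y]) auto
  then have "c^2 * f (Y (Suc k)) \<le> c^2 * (f (X (Suc k)) - (norm G)^2 / (2 * L))"
    unfolding fgm_Suc(2) G_def by (intro mult_left_mono gradient_step_descent) auto
  then have descent: "c^2 * f (Y (Suc k)) \<le> c^2 * f (X (Suc k)) - c^2 * (norm G)^2 / (2 * L)"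
    by (simp add: right_diff_distrib)
  have "real k * c * (f (X (Suc k)) + G \<bullet> (Y k - X (Suc k))) \<le> real k * c * f (Y k)"
    unfolding G_def c_def by (rule mult_left_mono[OF gradient_inequality]) simp
  moreover have "2 * c * (G \<bullet> (Z k - X (Suc k))) = real k * c * (G \<bullet> (X (Suc k) - Y k))"
    using arg_cong[OF fgm_coupling, of "\<lambda>v. c * (G \<bullet> v)" k] by simp
  ultimately have lower: "real k * c * f (X (Suc k)) - 2 * c * (G \<bullet> (Z k - X (Suc k))) \<le> real k * c * f (Y k)"
    by (simp add: inner_diff_right algebra_simps)
  have "G \<bullet> (u - X (Suc k)) + G \<bullet> (Z k - u) = G \<bullet> (Z k - X (Suc k))"
    by (simp add: inner_diff_right)
  moreover have "c^2 = real k * c + 2 * c" by (simp add: c_def power2_eq_square algebra_simps)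
  ultimately show ?thesis
    using descent lower fgm_z_dist_Suc[of k u]
    unfolding c_def[symmetric] G_def[symmetric] by (simp add: algebra_simps)
qed

lemma fgm_model_scaled:
  "4 * L * fgm_model f g L x0 n u =
     (\<Sum>k<n. 2 * (real k + 2) * (f (X (Suc k)) + g (X (Suc k)) \<bullet> (u - X (Suc k))))
     + 2 * L * (norm (Z 0 - u))^2"
proof -
  have "4 * L * ((real k + 2) / (2 * L) * a) = 2 * (real k + 2) * a" for k a
    using L_pos by simp
  then show ?thesis
    by (simp add: fgm_model_def distrib_left sum_distrib_left)
qed

lemma fgm_potential:
  assumes "\<And>k. k < n \<Longrightarrow> Y k \<in> cball xs R \<and> Z k \<in> cball xs R"
  shows "(\<Sum>k<n. (real k + 2)^2 * f (Y (Suc k)) - real k * (real k + 2) * f (Y k))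
           + 2 * L * (norm (Z n - u))^2 \<le> 4 * L * fgm_model f g L x0 n u"
  using assms
proof (induction n)
  case 0
  then show ?case by (simp add: fgm_model_scaled)
next
  case (Suc n)
  with fgm_step_estimate[of n u] show ?case
    by (simp add: fgm_model_scaled)
qed

lemma fgm_model_at_minimizer:
  "4 * L * fgm_model f g L x0 n xs \<le> real n * (real n + 3) * f xs + 2 * L * (norm (x0 - xs))^2"
proof -
  have "(\<Sum>k<n. 2 * (real k + 2) * (f (X (Suc k)) + g (X (Suc k)) \<bullet> (xs - X (Suc k))))
          \<le> (\<Sum>k<n. 2 * (real k + 2) * f xs)"
    by (intro sum_mono mult_left_mono gradient_inequality) simp
  also have "\<dots> = real n * (real n + 3) * f xs"
    by (simp only: sum_distrib_right[symmetric] sum_fgm_step_weights)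
  finally show ?thesis
    by (simp add: fgm_model_scaled fgm_0)
qed

lemma fgm_weighted_values_potential:
  assumes "N \<ge> 1" and "\<And>k. k < N \<Longrightarrow> Y k \<in> cball xs R \<and> Z k \<in> cball xs R"
  shows "fgm_weighted_sum (\<lambda>k. f (Y k)) N + 2 * L * (norm (Z N - u))^2 \<le> 4 * L * fgm_model f g L x0 N u"
  using fgm_potential[of N u] assms fgm_weighted_sum_telescope[OF assms(1), of "\<lambda>k. f (Y k)"] by simp

lemma fgm_in_cball:
  "X k \<in> cball xs (norm (x0 - xs)) \<and> Y k \<in> cball xs (norm (x0 - xs)) \<and> Z k \<in> cball xs (norm (x0 - xs))"
proof (induction k rule: less_induct)
  case (less k)
  define r where "r = norm (x0 - xs)"
  have r: "r \<le> R" using start_in_cball by (simp add: r_def)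
  show ?case
  proof (cases k)
    case 0
    then show ?thesis by (simp add: fgm_0 dist_norm norm_minus_commute)
  next
    case (Suc n)
    have balls: "Y j \<in> cball xs R \<and> Z j \<in> cball xs R" if "j < k" for j
      using less.IH[OF that] r unfolding r_def[symmetric] by auto
    have X: "X k \<in> cball xs r"
      unfolding Suc fgm_Suc(1) r_def by (rule convexD[OF convex_cball]) (use less.IH[of n] Suc in auto)
    have Y: "Y k \<in> cball xs r"
      unfolding Suc fgm_Suc(2) by (rule gradient_step_in_cball[OF _ r]) (use X Suc in simp)
    have "real k * (real k + 3) * f xs + 2 * L * (norm (Z k - xs))^2
            \<le> fgm_weighted_sum (\<lambda>j. f (Y j)) k + 2 * L * (norm (Z k - xs))^2"
      using fgm_weighted_sum_mono[of "\<lambda>_. f xs" "\<lambda>j. f (Y j)" k] fgm_weighted_sum_const[of k "f xs"]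
        minimizer Suc by simp
    also have "\<dots> \<le> 4 * L * fgm_model f g L x0 k xs"
      by (rule fgm_weighted_values_potential) (use Suc balls in auto)
    also have "\<dots> \<le> real k * (real k + 3) * f xs + 2 * L * (norm (x0 - xs))^2"
      by (rule fgm_model_at_minimizer)
    finally have "(norm (Z k - xs))^2 \<le> (norm (x0 - xs))^2"
      using L_pos by simp
    then have "Z k \<in> cball xs r"
      using power2_le_imp_le by (fastforce simp: r_def dist_norm norm_minus_commute)
    with X Y show ?thesis unfolding r_def by blast
  qed
qed

lemma fgm_weighted_values_le_model:
  assumes "N \<ge> 1"
  shows "fgm_weighted_sum (\<lambda>k. f (Y k)) N \<le> 4 * L * fgm_model f g L x0 N u"
proof -
  have "Y k \<in> cball xs R \<and> Z k \<in> cball xs R" for k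
    using fgm_in_cball[of k] start_in_cball by auto
  with fgm_weighted_values_potential[OF assms] have
    "fgm_weighted_sum (\<lambda>k. f (Y k)) N + 2 * L * (norm (Z N - u))^2 \<le> 4 * L * fgm_model f g L x0 N u" .
  moreover have "0 \<le> 2 * L * (norm (Z N - u))^2" using L_pos by simp
  ultimately show ?thesis by linarith
qed

end

theorem theorem1:
  fixes f :: "'a::euclidean_space \<Rightarrow> real" and g :: "'a \<Rightarrow> 'a"
    and xs x0 :: 'a and L :: real and N :: nat
  assumes conv: "convex_on UNIV f"
    and grad: "\<And>x. (f has_derivative (\<lambda>h. g x \<bullet> h)) (at x)"
    and minim: "\<And>x. f xs \<le> f x"
    and Lpos: "L > 0"
    and lip: "\<And>x y. x \<in> cball xs (norm (x0 - xs)) \<Longrightarrow> y \<in> cball xs (norm (x0 - xs)) \<Longrightarrow>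
               norm (g y - g x) \<le> L * norm (y - x)"
    and N: "N \<ge> 1"
  shows "(\<forall>k\<le>N. max (norm (fgm_x g L x0 k - xs)) (max (norm (fgm_y g L x0 k - xs)) (norm (fgm_z g L x0 k - xs)))
                   \<le> norm (x0 - xs))
    \<and> (let ybar = (1 / (real N * (real N + 3))) *\<^sub>R
                    ((\<Sum>k=1..N-1. fgm_y g L x0 k) + (real N + 1)^2 *\<^sub>R fgm_y g L x0 N)
       in f ybar \<le> 4 * L / (real N * (real N + 3)) *
             (INF x. (\<Sum>k<N. (real k + 2) / (2 * L) *
                        (f (fgm_x g L x0 (Suc k)) + g (fgm_x g L x0 (Suc k)) \<bullet> (x - fgm_x g L x0 (Suc k))))
                     + 1/2 * (norm (fgm_z g L x0 0 - x))^2)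
        \<and> f ybar - f xs \<le> 2 * L * (norm (fgm_z g L x0 0 - xs))^2 / (real N * (real N + 3))
        \<and> 2 * L * (norm (fgm_z g L x0 0 - xs))^2 / (real N * (real N + 3))
            \<le> 2 * L * (norm (x0 - xs))^2 / (real N + 1)^2)"
proof -
  interpret fgm_run f g xs L "norm (x0 - xs)" x0
    by unfold_locales (use conv grad minim Lpos lip in auto)
  define D where "D = real N * (real N + 3)"
  define ybar where "ybar = (1 / D) *\<^sub>R fgm_weighted_sum Y N"
  have D: "D > 0" using N by (simp add: D_def)
  note values_le_model = fgm_weighted_values_le_model[OF N]
  have jensen: "f ybar \<le> fgm_weighted_sum (\<lambda>k. f (Y k)) N / D"
    unfolding ybar_def D_def by (rule convex_on_fgm_weighted_average[OF conv N])
  have model_bound: "f ybar \<le> 4 * L / D * (INF u. fgm_model f g L x0 N u)"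
  proof -
    have "f ybar * D / (4 * L) \<le> fgm_model f g L x0 N u" for u
      using jensen values_le_model[of u] D Lpos by (simp add: field_simps)
    then have "f ybar * D / (4 * L) \<le> (INF u. fgm_model f g L x0 N u)"
      by (rule cINF_greatest[OF UNIV_not_empty])
    then show ?thesis using D Lpos by (simp add: field_simps)
  qed
  have gap: "f ybar - f xs \<le> 2 * L * (norm (Z 0 - xs))^2 / D"
    using jensen values_le_model[of xs] fgm_model_at_minimizer[of N] D
    by (simp add: fgm_0 field_simps D_def)
  have rate: "2 * L * (norm (Z 0 - xs))^2 / D \<le> 2 * L * (norm (x0 - xs))^2 / (real N + 1)^2"
  proof (unfold fgm_0, rule divide_left_mono)
    show "(real N + 1)^2 \<le> D" using N by (simp add: D_def power2_eq_square algebra_simps)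
  qed (use Lpos D in simp_all)
  show ?thesis
    using fgm_in_cball model_bound gap rate
    unfolding Let_def fgm_weighted_sum_def[symmetric] fgm_model_def[symmetric] ybar_def D_def
    by (auto simp: dist_norm norm_minus_commute)
qed

end
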